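(* Let $\alpha\in(0,\pi)$ and let $G\subset S_\alpha$ be a domain such that for some $r>0$, \[ G\cap B^2(r)=S_\alpha\cap B^2(r). \] Then $A_G\ge A_{S_\alpha}$.
   Context: $S_\alpha=\{\rho e^{it}:\rho>0,\ t\in(0,\alpha)\}\subset\mathbb{R}^2=\mathbb{C}$, and $B^2(r)$ is the open disk of radius $r$ centered at the origin. For a domain $G\subsetneq\mathbb{R}^n$ let $d_G(x)=d(x,\partial G)$; $k_G(x,y)=\inf_\gamma\int_\gamma\frac{|dx|}{d_G(x)}$ over rectifiable curves $\gamma\subset G$ joining $x,y$ (quasihyperbolic distance); $j_G(x,y)=\log\left(1+\frac{|x-y|}{\min\{d_G(x),d_G(y)\}}\right)$; and $A_G=\inf\{A\ge1: k_G\le A\,j_G\text{ on }G\times G\}$ (with $\inf\emptyset=+\infty$). *)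

theory Defs
  imports "HOL-Analysis.Analysis"
begin

definition sector :: "real \<Rightarrow> complex set" where
  "sector \<alpha> = {z. \<exists>\<rho> t. \<rho> > 0 \<and> 0 < t \<and> t < \<alpha> \<and> z = rcis \<rho> t}"

definition curve_variation :: "(real \<Rightarrow> 'a::real_normed_vector) \<Rightarrow> real \<Rightarrow> real \<Rightarrow> ereal" where
  "curve_variation g a b =
     Sup {ereal (\<Sum>i<n. dist (g (p i)) (g (p (Suc i)))) | p n.
            p 0 = a \<and> p n = b \<and> (\<forall>i<n. p i \<le> p (Suc i))}"

definition rectifiable_path :: "(real \<Rightarrow> 'a::real_normed_vector) \<Rightarrow> bool" where
  "rectifiable_path g \<longleftrightarrow> path g \<and> curve_variation g 0 1 < \<infinity>"

definition arclength_fun :: "(real \<Rightarrow> 'a::real_normed_vector) \<Rightarrow> real \<Rightarrow> real" where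
  "arclength_fun g t = real_of_ereal (curve_variation g 0 (max 0 (min 1 t)))"

definition arclength_integral :: "(real \<Rightarrow> 'a::real_normed_vector) \<Rightarrow> ('a \<Rightarrow> real) \<Rightarrow> ennreal" where
  "arclength_integral g f =
     (\<integral>\<^sup>+ t. ennreal (f (g t)) * indicator {0<..1} t \<partial>interval_measure (arclength_fun g))"

definition dG :: "'a::real_normed_vector set \<Rightarrow> 'a \<Rightarrow> real" where
  "dG G x = infdist x (frontier G)"

definition qh_dist :: "'a::real_normed_vector set \<Rightarrow> 'a \<Rightarrow> 'a \<Rightarrow> ennreal" where
  "qh_dist G x y =
     (INF g \<in> {g. rectifiable_path g \<and> path_image g \<subseteq> G \<and> pathstart g = x \<and> pathfinish g = y}.
        arclength_integral g (\<lambda>z. 1 / dG G z))"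

definition j_dist :: "'a::real_normed_vector set \<Rightarrow> 'a \<Rightarrow> 'a \<Rightarrow> real" where
  "j_dist G x y = ln (1 + dist x y / min (dG G x) (dG G y))"

text \<open>A_G = inf {A >= 1 : k_G <= A j_G on G x G}, with inf of the empty set = +infinity.\<close>
definition A_const :: "'a::real_normed_vector set \<Rightarrow> ereal" where
  "A_const G = Inf {ereal A | A. A \<ge> 1 \<and>
      (\<forall>x\<in>G. \<forall>y\<in>G. qh_dist G x y \<le> ennreal (A * j_dist G x y))}"

end

theory Submission
  imports Defs
begin

text \<open>
  The sector S is invariant under the dilations z \<mapsto> l z (l > 0), which multiply d_S and
  quasihyperbolic lengths by l; hence k_S and j_S are dilation invariant. Given x, y in S, dilate
  them close enough to the vertex that G and S have the same boundary distance there, so that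
  j_G and j_S agree at the dilated points. Since G \<subseteq> S gives d_G \<le> d_S, curves in G are
  at least as long for k_G as for k_S. So any A with k_G \<le> A j_G also satisfies k_S \<le> A j_S.
\<close>

definition scale_invariant :: "'a::real_vector set \<Rightarrow> bool" where
  "scale_invariant X \<longleftrightarrow> (\<forall>c>0. \<forall>z. c *\<^sub>R z \<in> X \<longleftrightarrow> z \<in> X)"

lemma scale_invariantD: "scale_invariant X \<Longrightarrow> c > 0 \<Longrightarrow> c *\<^sub>R z \<in> X \<longleftrightarrow> z \<in> X"
  by (simp add: scale_invariant_def)

lemma scale_invariant_image:
  assumes "scale_invariant X" and "c > 0"
  shows "(*\<^sub>R) c ` X = X"
proof safe
  fix z assume "z \<in> X"
  then show "z \<in> (*\<^sub>R) c ` X"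
    using assms scale_invariantD[of X c "z /\<^sub>R c"] by (intro image_eqI[of _ _ "z /\<^sub>R c"]) auto
qed (use assms scale_invariantD in blast)

lemma scale_invariant_Compl: "scale_invariant X \<Longrightarrow> scale_invariant (- X)"
  by (simp add: scale_invariant_def)

lemma scale_invariant_closure:
  fixes X :: "'a::real_normed_vector set"
  assumes "scale_invariant X"
  shows "scale_invariant (closure X)"
  unfolding scale_invariant_def
proof safe
  fix c :: real and z assume c: "c > 0"
  have img: "(*\<^sub>R) c ` closure X = closure X"
    using closure_scaleR[of c X] scale_invariant_image[OF assms c] by simp
  show "z \<in> closure X" if "c *\<^sub>R z \<in> closure X"
  proof -
    have "c *\<^sub>R z \<in> (*\<^sub>R) c ` closure X"
      using that img by simp
    then obtain w where "c *\<^sub>R z = c *\<^sub>R w" "w \<in> closure X"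
      by (rule imageE)
    then show ?thesis using c by simp
  qed
  show "c *\<^sub>R z \<in> closure X" if "z \<in> closure X"
    using that img by blast
qed

lemma scale_invariant_frontier:
  fixes X :: "'a::real_normed_vector set"
  assumes "scale_invariant X"
  shows "scale_invariant (frontier X)"
  using scale_invariant_closure[OF assms] scale_invariant_closure[OF scale_invariant_Compl[OF assms]]
  unfolding frontier_closures scale_invariant_def by blast

lemma scale_invariant_sector: "scale_invariant (sector \<alpha>)"
proof -
  have dilate: "c *\<^sub>R z \<in> sector \<alpha>" if c: "c > 0" and z: "z \<in> sector \<alpha>" for c z
  proof -
    obtain \<rho> t where "\<rho> > 0" "0 < t" "t < \<alpha>" "z = rcis \<rho> t"
      using z by (auto simp: sector_def)
    then show ?thesis
      using c unfolding sector_def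
      by (intro CollectI exI[of _ "c * \<rho>"] exI[of _ t]) (auto simp: rcis_def scaleR_conv_of_real)
  qed
  show ?thesis
    unfolding scale_invariant_def
  proof (intro allI impI iffI)
    fix c :: real and z assume c: "c > 0"
    show "c *\<^sub>R z \<in> sector \<alpha>" if "z \<in> sector \<alpha>"
      using dilate[OF c that] .
    show "z \<in> sector \<alpha>" if "c *\<^sub>R z \<in> sector \<alpha>"
      using dilate[of "1/c", OF _ that] c by simp
  qed
qed

lemma zero_notin_sector: "0 \<notin> sector \<alpha>"
  by (auto simp: sector_def rcis_def)

lemma infdist_scaleR_le:
  fixes A :: "'a::real_normed_vector set"
  assumes A: "scale_invariant A" and c: "c > 0"
  shows "infdist (c *\<^sub>R x) A \<le> c * infdist x A"
proof (cases "A = {}")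
  case False
  have "infdist (c *\<^sub>R x) A / c \<le> infdist x A"
    unfolding infdist_notempty[OF False, of x]
  proof (rule cINF_greatest[OF False])
    fix a assume "a \<in> A"
    then have "infdist (c *\<^sub>R x) A \<le> dist (c *\<^sub>R x) (c *\<^sub>R a)"
      using scale_invariantD[OF A c] by (intro infdist_le) auto
    also have "\<dots> = c * dist x a"
      using c by (simp add: dist_norm scaleR_diff_right[symmetric])
    finally show "infdist (c *\<^sub>R x) A / c \<le> dist x a"
      using c by (simp add: divide_le_eq mult.commute)
  qed
  then show ?thesis using c by (simp add: divide_le_eq mult.commute)
qed (simp add: infdist_def)

lemma infdist_scaleR:
  fixes A :: "'a::real_normed_vector set"
  assumes A: "scale_invariant A" and c: "c > 0"
  shows "infdist (c *\<^sub>R x) A = c * infdist x A"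
proof (rule antisym)
  show "infdist (c *\<^sub>R x) A \<le> c * infdist x A"
    by (rule infdist_scaleR_le[OF A c])
  have "infdist ((1/c) *\<^sub>R (c *\<^sub>R x)) A \<le> (1/c) * infdist (c *\<^sub>R x) A"
    by (rule infdist_scaleR_le[OF A]) (use c in simp)
  then show "c * infdist x A \<le> infdist (c *\<^sub>R x) A"
    using c by (simp add: field_simps)
qed

lemma dG_scaleR:
  fixes X :: "'a::real_normed_vector set"
  assumes "scale_invariant X" and "c > 0"
  shows "dG X (c *\<^sub>R z) = c * dG X z"
  unfolding dG_def by (rule infdist_scaleR[OF scale_invariant_frontier[OF assms(1)] assms(2)])

lemma j_dist_scaleR:
  fixes X :: "'a::real_normed_vector set"
  assumes X: "scale_invariant X" and c: "c > 0"
  shows "j_dist X (c *\<^sub>R x) (c *\<^sub>R y) = j_dist X x y"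
proof -
  have "dist (c *\<^sub>R x) (c *\<^sub>R y) = c * dist x y"
    using c by (simp add: dist_norm scaleR_diff_right[symmetric])
  moreover have "min (dG X (c *\<^sub>R x)) (dG X (c *\<^sub>R y)) = c * min (dG X x) (dG X y)"
    using c by (simp add: dG_scaleR[OF X c] min_mult_distrib_left)
  ultimately show ?thesis
    unfolding j_dist_def using c by simp
qed

lemma dG_measurable: "(\<lambda>z. 1 / dG (X::'a::real_normed_vector set) z) \<in> borel_measurable borel"
proof -
  have "(\<lambda>z. dG X z) \<in> borel_measurable borel"
    by (rule borel_measurable_continuous_onI) (simp add: dG_def continuous_on_infdist continuous_on_id)
  then show ?thesis by measurable
qed

lemma curve_variation_scaleR:
  fixes g :: "real \<Rightarrow> 'a::real_normed_vector"
  assumes c: "c > 0" and ab: "a \<le> b"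
  shows "curve_variation (\<lambda>t. c *\<^sub>R g t) a b = ereal c * curve_variation g a b"
proof -
  define P where "P = (\<lambda>(p::nat\<Rightarrow>real) n. p 0 = a \<and> p n = b \<and> (\<forall>i<n. p i \<le> p (Suc i)))"
  define Y where "Y = {ereal (\<Sum>i<n. dist (g (p i)) (g (p (Suc i)))) | p n. P p n}"
  have dist_scaled: "dist (c *\<^sub>R u) (c *\<^sub>R v) = c * dist u v" for u v :: 'a
    using c by (simp add: dist_norm scaleR_diff_right[symmetric])
  have scaled_sums:
    "{ereal (\<Sum>i<n. dist (c *\<^sub>R g (p i)) (c *\<^sub>R g (p (Suc i)))) | p n. P p n} = (\<lambda>x. ereal c * x) ` Y"
  proof (rule set_eqI, rule iffI)
    fix x assume "x \<in> {ereal (\<Sum>i<n. dist (c *\<^sub>R g (p i)) (c *\<^sub>R g (p (Suc i)))) | p n. P p n}"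
    then obtain p n where "P p n" "x = ereal (\<Sum>i<n. dist (c *\<^sub>R g (p i)) (c *\<^sub>R g (p (Suc i))))"
      by blast
    then show "x \<in> (\<lambda>x. ereal c * x) ` Y"
      unfolding Y_def
      by (intro image_eqI[of _ _ "ereal (\<Sum>i<n. dist (g (p i)) (g (p (Suc i))))"])
        (auto simp: dist_scaled sum_distrib_left)
  next
    fix x assume "x \<in> (\<lambda>x. ereal c * x) ` Y"
    then obtain p n where "P p n" "x = ereal c * ereal (\<Sum>i<n. dist (g (p i)) (g (p (Suc i))))"
      unfolding Y_def by blast
    then show "x \<in> {ereal (\<Sum>i<n. dist (c *\<^sub>R g (p i)) (c *\<^sub>R g (p (Suc i)))) | p n. P p n}"
      by (auto simp: dist_scaled sum_distrib_left)
  qed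
  have "P (\<lambda>i. if i = 0 then a else b) 1"
    using ab by (auto simp: P_def)
  then have "Y \<noteq> {}"
    unfolding Y_def by blast
  have "curve_variation (\<lambda>t. c *\<^sub>R g t) a b = Sup ((\<lambda>x. ereal c * x) ` Y)"
    unfolding curve_variation_def scaled_sums[unfolded P_def, symmetric] P_def by simp
  also have "\<dots> = ereal c * Sup Y"
    using Sup_ereal_mult_left'[OF \<open>Y \<noteq> {}\<close>, of c "\<lambda>x. x"] c by simp
  also have "Sup Y = curve_variation g a b"
    unfolding Y_def P_def curve_variation_def by simp
  finally show ?thesis .
qed

lemma arclength_fun_scaleR:
  fixes g :: "real \<Rightarrow> 'a::real_normed_vector"
  assumes "c > 0"
  shows "arclength_fun (\<lambda>t. c *\<^sub>R g t) = (\<lambda>t. c * arclength_fun g t)"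
  by (rule ext) (simp add: arclength_fun_def curve_variation_scaleR[OF assms])

lemma interval_measure_scale_of_Ioc:
  fixes F :: "real \<Rightarrow> real"
  assumes Ioc: "\<And>a b. a \<le> b \<Longrightarrow> emeasure (interval_measure F) {a<..b} = ennreal (F b - F a)"
    and c: "c > 0"
  shows "interval_measure (\<lambda>t. c * F t) = scale_measure (ennreal c) (interval_measure F)"
proof -
  let ?M = "interval_measure F" and ?N = "interval_measure (\<lambda>t. c * F t)"
  let ?S = "scale_measure (ennreal c) ?M"
  have S_measure_space: "measure_space (space ?S) (sets ?S) (emeasure ?S)"
    by (rule measure_space)
  have N_Ioc: "emeasure ?N {a<..b} = ennreal (c * F b - c * F a)" if "a \<le> b" for a b
  proof (rule emeasure_extend_measure_Pair[OF interval_measure_def, where \<mu>'="emeasure ?S"])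
    fix a b :: real assume "a \<le> b"
    then show "emeasure ?S {a<..b} = ennreal (c * F b - c * F a)"
      using Ioc[of a b] c by (simp add: ennreal_mult'[symmetric] right_diff_distrib)
  next
    show "positive (sets ?N) (emeasure ?S)" "countably_additive (sets ?N) (emeasure ?S)"
      using S_measure_space by (simp_all add: measure_space_def)
  qed (use that in auto)
  show ?thesis
  proof (rule measure_eqI_generator_eq[where \<Omega>=UNIV and E="range (\<lambda>(a, b). {a<..b::real})"])
    fix X assume "X \<in> range (\<lambda>(a, b). {a<..b::real})"
    then obtain a b where X: "X = {a<..b}" by auto
    show "emeasure ?N X = emeasure ?S X"
    proof (cases "a \<le> b")
      case True
      then show ?thesis
        using X N_Ioc[OF True] Ioc[OF True] c
        by (simp add: ennreal_mult'[symmetric] right_diff_distrib)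
    qed (use X in simp)
  next
    show "(\<Union>i. {- real (i::nat)<..real i}) = UNIV"
    proof (safe; simp)
      fix x :: real
      obtain n :: nat where "\<bar>x\<bar> < real n" using reals_Archimedean2 by blast
      then show "\<exists>i::nat. - real i < x \<and> x \<le> real i" by (intro exI[of _ n]) auto
    qed
  next
    fix i :: nat
    show "emeasure ?N {- real i<..real i} \<noteq> \<infinity>"
      using N_Ioc[of "- real i" "real i"] by simp
  qed (auto simp: borel_sigma_sets_Ioc Int_stable_def)
qed

text \<open>If no measure takes the values F b - F a on the intervals {a<..b} (e.g. F not increasing),
  interval_measure F is the zero measure; so interval_measure_scale needs no hypothesis on F.\<close>

lemma emeasure_interval_measure_degenerate:
  fixes F :: "real \<Rightarrow> real"
  assumes "\<not> (\<forall>a b. a \<le> b \<longrightarrow> emeasure (interval_measure F) {a<..b} = ennreal (F b - F a))"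
  shows "emeasure (interval_measure F) X = 0"
proof -
  let ?E = "(\<lambda>(a,b). {a<..b::real}) ` {(a,b). a \<le> b}"
  have no_extension: "\<not> (\<exists>\<mu>'. (\<forall>i\<in>{(a,b). a \<le> b}. \<mu>' ((\<lambda>(a,b). {a<..b}) i) = (\<lambda>(a,b). ennreal (F b - F a)) i)
      \<and> measure_space UNIV (sigma_sets UNIV ?E) \<mu>')"
  proof
    assume "\<exists>\<mu>'. (\<forall>i\<in>{(a,b). a \<le> b}. \<mu>' ((\<lambda>(a,b). {a<..b}) i) = (\<lambda>(a,b). ennreal (F b - F a)) i)
      \<and> measure_space UNIV (sigma_sets UNIV ?E) \<mu>'"
    then obtain \<mu>' where eq: "\<forall>i\<in>{(a,b). a \<le> b}. \<mu>' ((\<lambda>(a,b). {a<..b}) i) = (\<lambda>(a,b). ennreal (F b - F a)) i"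
      and ms: "measure_space UNIV (sigma_sets UNIV ?E) \<mu>'" by blast
    have sets: "sets (interval_measure F) = sigma_sets UNIV ?E"
      unfolding interval_measure_def by (rule sets_extend_measure) auto
    have "emeasure (interval_measure F) {a<..b} = ennreal (F b - F a)" if "a \<le> b" for a b
      apply (rule emeasure_extend_measure_Pair[OF interval_measure_def, where \<mu>'=\<mu>'])
      apply (unfold sets)
      using eq ms that by (auto simp: measure_space_def)
    with assms show False by blast
  qed
  have zero: "interval_measure F = measure_of UNIV ?E (\<lambda>_. 0)"
    using no_extension unfolding interval_measure_def extend_measure_def by auto
  show ?thesis
  proof (cases "X \<in> sets (interval_measure F)")
    case True
    then show ?thesis
      unfolding zero
      by (intro emeasure_measure_of[OF refl]) (auto simp: positive_def countably_additive_def)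
  qed (simp add: emeasure_notin_sets)
qed

lemma interval_measure_scale:
  fixes F :: "real \<Rightarrow> real"
  assumes c: "c > 0"
  shows "interval_measure (\<lambda>t. c * F t) = scale_measure (ennreal c) (interval_measure F)"
proof (cases "\<forall>a b. a \<le> b \<longrightarrow> emeasure (interval_measure F) {a<..b} = ennreal (F b - F a)")
  case True
  then show ?thesis using interval_measure_scale_of_Ioc[OF _ c, of F] by blast
next
  case False
  have "\<not> (\<forall>a b. a \<le> b \<longrightarrow> emeasure (interval_measure (\<lambda>t. c * F t)) {a<..b} = ennreal (c * F b - c * F a))"
  proof
    assume Ioc: "\<forall>a b. a \<le> b \<longrightarrow> emeasure (interval_measure (\<lambda>t. c * F t)) {a<..b} = ennreal (c * F b - c * F a)"
    have "interval_measure (\<lambda>t. (1/c) * (c * F t)) = scale_measure (ennreal (1/c)) (interval_measure (\<lambda>t. c * F t))"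
      by (rule interval_measure_scale_of_Ioc) (use Ioc c in auto)
    moreover have "(\<lambda>t. (1/c) * (c * F t)) = F"
      using c by auto
    ultimately have F_eq: "interval_measure F = scale_measure (ennreal (1/c)) (interval_measure (\<lambda>t. c * F t))"
      by simp
    have "emeasure (interval_measure F) {a<..b} = ennreal (F b - F a)" if "a \<le> b" for a b
    proof -
      have "emeasure (interval_measure F) {a<..b} = ennreal (1/c) * ennreal (c * F b - c * F a)"
        using Ioc that unfolding F_eq by simp
      also have "\<dots> = ennreal (F b - F a)"
        using c by (simp add: ennreal_mult'[symmetric] right_diff_distrib[symmetric])
      finally show ?thesis .
    qed
    with False show False by blast
  qed
  then have "emeasure (interval_measure (\<lambda>t. c * F t)) X = 0" for X
    by (rule emeasure_interval_measure_degenerate)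
  moreover have "emeasure (interval_measure F) X = 0" for X
    using False by (rule emeasure_interval_measure_degenerate)
  ultimately show ?thesis
    by (intro measure_eqI) simp_all
qed

lemma arclength_integral_scaleR:
  fixes g :: "real \<Rightarrow> 'a::real_normed_vector"
  assumes c: "c > 0" and g: "continuous_on {0..1} g" and f: "f \<in> borel_measurable borel"
    and f_scale: "\<And>z. f (c *\<^sub>R z) = f z / c"
  shows "arclength_integral (\<lambda>t. c *\<^sub>R g t) f = arclength_integral g f"
proof -
  define clamp where "clamp = (\<lambda>t::real. max 0 (min 1 t))"
  let ?\<mu> = "interval_measure (arclength_fun g)"
  define h where "h = (\<lambda>t. ennreal (f (g (clamp t))) * indicator {0<..1} t)"
  have "continuous_on UNIV (\<lambda>t. g (clamp t))"
    by (rule continuous_on_compose2[OF g]) (auto simp: clamp_def intro!: continuous_intros)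
  then have "(\<lambda>t. f (g (clamp t))) \<in> borel_measurable borel"
    using measurable_compose[OF borel_measurable_continuous_onI f] by (simp add: o_def)
  then have h_measurable: "h \<in> borel_measurable ?\<mu>"
    unfolding h_def
    by (simp add: measurable_cong_sets[OF sets_interval_measure refl] borel_measurable_indicator)
  have h_eq: "h t = ennreal (f (g t)) * indicator {0<..1} t" for t
    by (cases "t \<in> {0<..1}") (auto simp: h_def clamp_def)
  have scaled: "ennreal (f (c *\<^sub>R g t)) * indicator {0<..1} t = ennreal (1/c) * h t" for t
    using c by (cases "t \<in> {0<..1}") (simp_all add: h_eq f_scale ennreal_mult'[symmetric] divide_inverse mult.commute)
  have "arclength_integral (\<lambda>t. c *\<^sub>R g t) f
      = (\<integral>\<^sup>+ t. ennreal (1/c) * h t \<partial>scale_measure (ennreal c) ?\<mu>)"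
    unfolding arclength_integral_def arclength_fun_scaleR[OF c] interval_measure_scale[OF c] scaled ..
  also have "\<dots> = ennreal c * (ennreal (1/c) * integral\<^sup>N ?\<mu> h)"
  proof -
    have "(\<lambda>t. ennreal (1/c) * h t) \<in> borel_measurable ?\<mu>"
      using h_measurable by measurable
    then show ?thesis
      by (simp add: nn_integral_scale_measure nn_integral_cmult[OF h_measurable])
  qed
  also have "\<dots> = integral\<^sup>N ?\<mu> h"
    using c by (simp add: mult.assoc[symmetric] ennreal_mult'[symmetric])
  also have "\<dots> = arclength_integral g f"
    unfolding arclength_integral_def h_eq ..
  finally show ?thesis .
qed

lemma qh_dist_le_qh_dist_scaleR:
  fixes X :: "'a::real_normed_vector set"
  assumes X: "scale_invariant X" and l: "l > 0"
  shows "qh_dist X x y \<le> qh_dist X (l *\<^sub>R x) (l *\<^sub>R y)"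
  unfolding qh_dist_def
proof (rule INF_mono)
  fix g assume "g \<in> {g. rectifiable_path g \<and> path_image g \<subseteq> X \<and> pathstart g = l *\<^sub>R x \<and> pathfinish g = l *\<^sub>R y}"
  then have g: "path g" "curve_variation g 0 1 < \<infinity>" "path_image g \<subseteq> X"
    "pathstart g = l *\<^sub>R x" "pathfinish g = l *\<^sub>R y"
    by (auto simp: rectifiable_path_def)
  define h where "h = (\<lambda>t. (1/l) *\<^sub>R g t)"
  have "path h"
    unfolding h_def using g(1) by (simp add: path_def continuous_intros)
  moreover have "curve_variation h 0 1 < \<infinity>"
    unfolding h_def using curve_variation_scaleR[of "1/l" 0 1 g] l g(2)
    by (cases "curve_variation g 0 1") auto
  moreover have "path_image h \<subseteq> X"
    using g(3) l scale_invariantD[OF X, of "1/l"] by (auto simp: h_def path_image_def)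
  moreover have "pathstart h = x" "pathfinish h = y"
    using g(4,5) l by (auto simp: h_def pathstart_def pathfinish_def)
  moreover have "arclength_integral h (\<lambda>z. 1 / dG X z) = arclength_integral g (\<lambda>z. 1 / dG X z)"
    unfolding h_def
    by (rule arclength_integral_scaleR)
      (use l g(1) in \<open>simp_all add: path_def dG_measurable dG_scaleR[OF X]\<close>)
  ultimately show "\<exists>h\<in>{g. rectifiable_path g \<and> path_image g \<subseteq> X \<and> pathstart g = x \<and> pathfinish g = y}.
      arclength_integral h (\<lambda>z. 1 / dG X z) \<le> arclength_integral g (\<lambda>z. 1 / dG X z)"
    by (intro bexI[of _ h]) (auto simp: rectifiable_path_def)
qed

lemma dG_eq_infdist_Compl:
  fixes X :: "'a::euclidean_space set"
  assumes z: "z \<in> X" and w: "w \<notin> X"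
  shows "dG X z = infdist z (- X)"
proof -
  have nearer_frontier: "\<exists>p\<in>frontier X. dist z p \<le> dist z w'" if "w' \<notin> X" for w'
  proof -
    have "closed_segment z w' \<inter> frontier X \<noteq> {}"
      by (rule connected_Int_frontier) (use z that in auto)
    then obtain p where p: "p \<in> closed_segment z w'" "p \<in> frontier X" by blast
    then show ?thesis
      using dist_in_closed_segment[OF p(1)] by (auto simp: dist_commute)
  qed
  have "frontier X \<noteq> {}" and "- X \<noteq> {}"
    using nearer_frontier[OF w] w by auto
  have "infdist z (frontier X) \<le> infdist z (- X)"
    unfolding infdist_notempty[OF \<open>- X \<noteq> {}\<close>]
  proof (rule cINF_greatest[OF \<open>- X \<noteq> {}\<close>])
    fix w' assume "w' \<in> - X"
    then obtain p where "p \<in> frontier X" "dist z p \<le> dist z w'"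
      using nearer_frontier by blast
    then show "infdist z (frontier X) \<le> dist z w'" by (rule infdist_le2)
  qed
  moreover have "infdist z (- X) \<le> infdist z (frontier X)"
    unfolding infdist_notempty[OF \<open>frontier X \<noteq> {}\<close>]
  proof (rule cINF_greatest[OF \<open>frontier X \<noteq> {}\<close>])
    fix p assume "p \<in> frontier X"
    then have "infdist p (- X) = 0"
      using in_closure_iff_infdist_zero[OF \<open>- X \<noteq> {}\<close>]
      by (simp add: frontier_def closure_complement)
    then show "infdist z (- X) \<le> dist z p"
      using infdist_triangle[of z "- X" p] by simp
  qed
  ultimately show ?thesis
    unfolding dG_def by simp
qed

lemma dG_pos:
  fixes X :: "'a::euclidean_space set"
  assumes "open X" and "z \<in> X" and "w \<notin> X"
  shows "0 < dG X z"
proof -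
  have "0 < infdist z (- X)"
    by (rule infdist_pos_not_in_closed) (use assms in auto)
  then show ?thesis
    using dG_eq_infdist_Compl[of z X w] assms by simp
qed

lemma dG_mono:
  fixes G S :: "'a::euclidean_space set"
  assumes "G \<subseteq> S" and "z \<in> G" and "w \<notin> S"
  shows "dG G z \<le> dG S z"
proof -
  have "infdist z (- G) \<le> infdist z (- S)"
    by (rule infdist_mono) (use assms in auto)
  moreover have "w \<notin> G" "z \<in> S"
    using assms by auto
  ultimately show ?thesis
    using assms dG_eq_infdist_Compl[of z G w] dG_eq_infdist_Compl[of z S w] by simp
qed

lemma qh_dist_antimono:
  fixes G S :: "'a::euclidean_space set"
  assumes "open G" and "G \<subseteq> S" and "w \<notin> S"
  shows "qh_dist S x y \<le> qh_dist G x y"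
  unfolding qh_dist_def
proof (rule INF_mono)
  fix g assume g: "g \<in> {g. rectifiable_path g \<and> path_image g \<subseteq> G \<and> pathstart g = x \<and> pathfinish g = y}"
  have "ennreal (1 / dG S (g t)) * indicator {0<..1} t \<le> ennreal (1 / dG G (g t)) * indicator {0<..1} t" for t
  proof (cases "t \<in> {0<..1}")
    case True
    then have "g t \<in> G"
      using g by (auto simp: path_image_def)
    moreover have "w \<notin> G"
      using assms by auto
    ultimately have "0 < dG G (g t)" "dG G (g t) \<le> dG S (g t)"
      using dG_pos[OF \<open>open G\<close>] dG_mono[OF \<open>G \<subseteq> S\<close> _ \<open>w \<notin> S\<close>] by auto
    then show ?thesis
      using True by (simp add: frac_le ennreal_leI)
  qed simp
  then have "arclength_integral g (\<lambda>z. 1 / dG S z) \<le> arclength_integral g (\<lambda>z. 1 / dG G z)"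
    unfolding arclength_integral_def by (rule nn_integral_mono)
  then show "\<exists>h\<in>{g. rectifiable_path g \<and> path_image g \<subseteq> S \<and> pathstart g = x \<and> pathfinish g = y}.
      arclength_integral h (\<lambda>z. 1 / dG S z) \<le> arclength_integral g (\<lambda>z. 1 / dG G z)"
    using g assms(2) by (intro bexI[of _ g]) auto
qed

lemma mem_if_agree_near:
  assumes "G \<inter> ball a r = S \<inter> ball a r" and "z \<in> S" and "dist a z < r"
  shows "z \<in> G"
proof -
  have "z \<in> S \<inter> ball a r"
    using assms(2,3) by simp
  then show ?thesis
    unfolding assms(1)[symmetric] by simp
qed

text \<open>Points of the complement of G within distance r of a lie outside S, and those farther away
  are farther from z than a, which is itself outside S.\<close>

lemma dG_eq_if_agree_near:
  fixes G S :: "'a::euclidean_space set"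
  assumes sub: "G \<subseteq> S" and a: "a \<notin> S" and agree: "G \<inter> ball a r = S \<inter> ball a r"
    and z: "z \<in> G" and near: "dist a z < r / 2"
  shows "dG G z = dG S z"
proof (rule antisym)
  show "dG G z \<le> dG S z"
    by (rule dG_mono[OF sub z a])
  have "a \<notin> G" "- G \<noteq> {}"
    using sub a by auto
  have "infdist z (- S) \<le> infdist z (- G)"
    unfolding infdist_notempty[OF \<open>- G \<noteq> {}\<close>]
  proof (rule cINF_greatest[OF \<open>- G \<noteq> {}\<close>])
    fix w assume w: "w \<in> - G"
    show "infdist z (- S) \<le> dist z w"
    proof (cases "dist a w < r")
      case True
      then have "w \<notin> S"
        using w mem_if_agree_near[OF agree] by blast
      then show ?thesis
        by (intro infdist_le) auto
    next
      case False
      have "infdist z (- S) \<le> dist z a"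
        using a by (intro infdist_le) auto
      also have "\<dots> \<le> dist z w"
        using False near dist_triangle[of a w z] dist_triangle[of a z w] dist_commute[of z a] dist_commute[of z w] by linarith
      finally show ?thesis .
    qed
  qed
  then show "dG S z \<le> dG G z"
    using dG_eq_infdist_Compl[OF z \<open>a \<notin> G\<close>] dG_eq_infdist_Compl[of z S a] z sub a by auto
qed

lemma j_dist_eq_if_agree_near:
  fixes G S :: "'a::euclidean_space set"
  assumes "G \<subseteq> S" and "a \<notin> S" and "G \<inter> ball a r = S \<inter> ball a r"
    and "x \<in> G" "y \<in> G" "dist a x < r / 2" "dist a y < r / 2"
  shows "j_dist G x y = j_dist S x y"
  using dG_eq_if_agree_near[OF assms(1-3)] assms(4-7) by (simp add: j_dist_def)

lemma A_const_le_A_const: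
  assumes "\<And>x y. x \<in> S \<Longrightarrow> y \<in> S \<Longrightarrow> \<exists>x'\<in>G. \<exists>y'\<in>G.
      qh_dist S x y \<le> qh_dist G x' y' \<and> j_dist G x' y' \<le> j_dist S x y"
  shows "A_const S \<le> A_const G"
  unfolding A_const_def
proof (rule Inf_superset_mono, rule subsetI)
  fix e assume "e \<in> {ereal A |A. 1 \<le> A \<and> (\<forall>x\<in>G. \<forall>y\<in>G. qh_dist G x y \<le> ennreal (A * j_dist G x y))}"
  then obtain A where e: "e = ereal A" and "1 \<le> A"
    and A: "\<forall>x\<in>G. \<forall>y\<in>G. qh_dist G x y \<le> ennreal (A * j_dist G x y)" by blast
  have "qh_dist S x y \<le> ennreal (A * j_dist S x y)" if xy: "x \<in> S" "y \<in> S" for x y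
  proof -
    obtain x' y' where "x' \<in> G" "y' \<in> G" and k: "qh_dist S x y \<le> qh_dist G x' y'"
      and j: "j_dist G x' y' \<le> j_dist S x y"
      using assms[OF xy] by blast
    note k
    also have "qh_dist G x' y' \<le> ennreal (A * j_dist G x' y')"
      using A \<open>x' \<in> G\<close> \<open>y' \<in> G\<close> by blast
    also have "\<dots> \<le> ennreal (A * j_dist S x y)"
      using j \<open>1 \<le> A\<close> by (intro ennreal_leI mult_left_mono) auto
    finally show ?thesis .
  qed
  then show "e \<in> {ereal A |A. 1 \<le> A \<and> (\<forall>x\<in>S. \<forall>y\<in>S. qh_dist S x y \<le> ennreal (A * j_dist S x y))}"
    using e \<open>1 \<le> A\<close> by blast
qed

lemma exists_scaleR_into_ball:
  fixes x y :: "'a::real_normed_vector"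
  assumes "e > 0"
  obtains l where "l > 0" "norm (l *\<^sub>R x) < e" "norm (l *\<^sub>R y) < e"
proof
  define m where "m = norm x + norm y + 1"
  have "m > 0"
    unfolding m_def using norm_ge_zero[of x] norm_ge_zero[of y] by linarith
  then show "e / m > 0"
    using assms by simp
  have shrink: "norm ((e / m) *\<^sub>R z) < e" if "norm z < m" for z
    using \<open>m > 0\<close> assms that by (simp add: field_simps)
  have "norm x < m" "norm y < m"
    unfolding m_def using norm_ge_zero[of x] norm_ge_zero[of y] by linarith+
  then show "norm ((e / m) *\<^sub>R x) < e" "norm ((e / m) *\<^sub>R y) < e"
    by (simp_all only: shrink)
qed

theorem theorem5p2:
  fixes \<alpha> r :: real and G :: "complex set"
  assumes "0 < \<alpha>" and "\<alpha> < pi"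
    and "open G" and "connected G" and "G \<noteq> {}"
    and "G \<subseteq> sector \<alpha>"
    and "0 < r"
    and "G \<inter> ball 0 r = sector \<alpha> \<inter> ball 0 r"
  shows "A_const G \<ge> A_const (sector \<alpha>)"
proof (rule A_const_le_A_const)
  fix x y assume xy: "x \<in> sector \<alpha>" "y \<in> sector \<alpha>"
  obtain l where "l > 0" and near: "norm (l *\<^sub>R x) < r / 2" "norm (l *\<^sub>R y) < r / 2"
    using exists_scaleR_into_ball[of "r / 2"] \<open>0 < r\<close> by auto
  have in_G: "l *\<^sub>R x \<in> G" "l *\<^sub>R y \<in> G"
    using near xy \<open>0 < r\<close> scale_invariantD[OF scale_invariant_sector \<open>l > 0\<close>]
    by (auto intro!: mem_if_agree_near[OF assms(8)])
  have "j_dist G (l *\<^sub>R x) (l *\<^sub>R y) = j_dist (sector \<alpha>) (l *\<^sub>R x) (l *\<^sub>R y)"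
    using in_G near by (intro j_dist_eq_if_agree_near[OF assms(6) zero_notin_sector assms(8)]) auto
  also have "\<dots> = j_dist (sector \<alpha>) x y"
    by (rule j_dist_scaleR[OF scale_invariant_sector \<open>l > 0\<close>])
  finally have "j_dist G (l *\<^sub>R x) (l *\<^sub>R y) = j_dist (sector \<alpha>) x y" .
  moreover have "qh_dist (sector \<alpha>) x y \<le> qh_dist G (l *\<^sub>R x) (l *\<^sub>R y)"
    using qh_dist_le_qh_dist_scaleR[OF scale_invariant_sector \<open>l > 0\<close>]
      qh_dist_antimono[OF \<open>open G\<close> assms(6) zero_notin_sector] by (rule order_trans)
  ultimately show "\<exists>x'\<in>G. \<exists>y'\<in>G. qh_dist (sector \<alpha>) x y \<le> qh_dist G x' y' \<and>
      j_dist G x' y' \<le> j_dist (sector \<alpha>) x y"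
    using in_G by (metis order.refl)
qed

end
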